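(* For every $\epsilon>0$ and every $m\in\mathbb N$ there exist $\delta>0$ and $n_0\in\mathbb N$ such that the following holds. If $n>n_0$ and $\sigma\in S_n$ has at most $n^{\delta}$ cycles of length $i$ for each $i<m$, then $E(\sigma)\le 1/m+\epsilon$.
   Context: For $\sigma\in S_n$ let $f_\sigma(i)$ be the number of $i$-cycles of $\sigma$ (fixed points are $1$-cycles). Define $e_1,\dots,e_n$ by $e_1+\cdots+e_k=\max\left(\frac{\log\left(\sum_{i=1}^k i f_\sigma(i)\right)}{\log n},0\right)$ for $1\le k\le n$ (with $\log 0=-\infty$), and set $E(\sigma)=\sum_{i=1}^n e_i/i$. *)

theory Defs
  imports "HOL-Analysis.Analysis" "HOL-Combinatorics.Combinatorics"
begin

text \<open>Permutations in S_n are functions sigma with sigma permutes {1..n}.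
  The cycles of sigma are its orbits on {1..n} (fixed points give 1-cycles).\<close>

definition cycles_of :: "nat \<Rightarrow> (nat \<Rightarrow> nat) \<Rightarrow> nat set set" where
  "cycles_of n \<sigma> = (\<lambda>x. orbit \<sigma> x) ` {1..n}"

definition cyc_count :: "nat \<Rightarrow> (nat \<Rightarrow> nat) \<Rightarrow> nat \<Rightarrow> nat" where
  "cyc_count n \<sigma> i = card {C \<in> cycles_of n \<sigma>. card C = i}"

text \<open>Partial sums e_1 + ... + e_k = max(log(sum_{i=1}^k i f(i)) / log n, 0),
  with log 0 = -infinity (so the value is 0 when the inner sum is 0).\<close>
definition E_partial :: "nat \<Rightarrow> (nat \<Rightarrow> nat) \<Rightarrow> nat \<Rightarrow> real" where
  "E_partial n \<sigma> k =
     (let s = (\<Sum>i=1..k. i * cyc_count n \<sigma> i)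
      in if s = 0 then 0 else max (ln (real s) / ln (real n)) 0)"

definition e_coef :: "nat \<Rightarrow> (nat \<Rightarrow> nat) \<Rightarrow> nat \<Rightarrow> real" where
  "e_coef n \<sigma> k = E_partial n \<sigma> k - E_partial n \<sigma> (k - 1)"

definition E_val :: "nat \<Rightarrow> (nat \<Rightarrow> nat) \<Rightarrow> real" where
  "E_val n \<sigma> = (\<Sum>i=1..n. e_coef n \<sigma> i / real i)"

end

theory Submission
  imports Defs "HOL-Real_Asymp.Real_Asymp"
begin

text \<open>Write \<open>a k = e\<^sub>1 + \<dots> + e\<^sub>k\<close>, so \<open>a k \<le> 1\<close> because the cycles of length at most \<open>k\<close>
  cover at most \<open>n\<close> points. If there are at most \<open>n\<^sup>\<delta>\<close> cycles of each length \<open>i < m\<close>, those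
  cycles cover at most \<open>m\<^sup>2 n\<^sup>\<delta>\<close> points, so \<open>a k \<le> \<delta> + o(1)\<close> for \<open>k < m\<close>. Summation by parts gives
  \<open>E(\<sigma>) = a n / n + \<Sum>\<^sub>i\<^sub><\<^sub>n a i (1/i - 1/(i+1))\<close>, and the telescoping weights \<open>1/i - 1/(i+1)\<close> add up
  to \<open>1 - 1/m\<close> over \<open>i < m\<close>, and together with the boundary weight \<open>1/n\<close> to \<open>1/m\<close> over \<open>i \<ge> m\<close>. Hence \<open>E(\<sigma>) \<le> \<delta> + o(1) + 1/m\<close>.\<close>

lemma cycles_of_subset:
  assumes "\<sigma> permutes {1..n}" and "C \<in> cycles_of n \<sigma>"
  shows "C \<subseteq> {1..n}"
proof -
  obtain x where "x \<in> {1..n}" "C = orbit \<sigma> x"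
    using assms(2) unfolding cycles_of_def by auto
  then show ?thesis using permutes_orbit_subset[OF assms(1)] by simp
qed

lemma cycles_of_disjoint:
  assumes "\<sigma> permutes {1..n}"
  shows "disjoint (cycles_of n \<sigma>)"
proof (rule pairwiseI)
  fix A B assume "A \<in> cycles_of n \<sigma>" "B \<in> cycles_of n \<sigma>" "A \<noteq> B"
  then obtain x z where A: "A = orbit \<sigma> x" and B: "B = orbit \<sigma> z"
    unfolding cycles_of_def by auto
  have cyclic: "\<And>x. cyclic_on \<sigma> (orbit \<sigma> x)"
    using cyclic_on_orbit[OF assms] by simp
  show "disjnt A B"
  proof (rule ccontr)
    assume "\<not> disjnt A B"
    then obtain y where "y \<in> A" "y \<in> B" unfolding disjnt_def by auto
    then have "orbit \<sigma> y = A" "orbit \<sigma> y = B"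
      using orbit_cyclic_eq3[OF cyclic, of y x] orbit_cyclic_eq3[OF cyclic, of y z] A B
      by simp_all
    with \<open>A \<noteq> B\<close> show False by simp
  qed
qed

lemma weighted_cycle_count_le:
  assumes "\<sigma> permutes {1..n}"
  shows "(\<Sum>i=1..k. i * cyc_count n \<sigma> i) \<le> n"
proof -
  let ?Cy = "cycles_of n \<sigma>"
  let ?A = "{C \<in> ?Cy. card C \<in> {1..k}}"
  have fin: "finite ?Cy" unfolding cycles_of_def by simp
  have sub: "\<And>C. C \<in> ?Cy \<Longrightarrow> C \<subseteq> {1..n}"
    using cycles_of_subset[OF assms] .
  have "(\<Sum>i=1..k. i * cyc_count n \<sigma> i) = (\<Sum>i=1..k. \<Sum>C\<in>{C\<in>?A. card C = i}. card C)"
  proof (rule sum.cong[OF refl])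
    fix i assume "i \<in> {1..k}"
    then have "{C\<in>?A. card C = i} = {C \<in> ?Cy. card C = i}" by auto
    then show "i * cyc_count n \<sigma> i = (\<Sum>C\<in>{C\<in>?A. card C = i}. card C)"
      unfolding cyc_count_def by simp
  qed
  also have "\<dots> = (\<Sum>C\<in>?A. card C)"
    by (rule sum.group) (use fin in auto)
  also have "\<dots> \<le> (\<Sum>C\<in>?Cy. card C)"
    by (rule sum_mono2[OF fin]) auto
  also have "\<dots> = card (\<Union>?Cy)"
    using card_Union_disjoint[OF cycles_of_disjoint[OF assms]] sub
    by (metis finite_atLeastAtMost finite_subset)
  also have "\<dots> \<le> card {1..n}"
    by (rule card_mono) (use sub in auto)
  finally show ?thesis by simp
qed

lemma E_partial_le_log_ratio:
  fixes b :: real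
  assumes "n \<ge> 2" and "b \<ge> 1" and "real (\<Sum>i=1..k. i * cyc_count n \<sigma> i) \<le> b"
  shows "E_partial n \<sigma> k \<le> ln b / ln (real n)"
proof -
  define s where "s = (\<Sum>i=1..k. i * cyc_count n \<sigma> i)"
  have "ln (real n) > 0" and "ln b \<ge> 0" using assms(1,2) by simp_all
  moreover have "ln (real s) \<le> ln b" if "s \<noteq> 0"
    using that assms(2,3) unfolding s_def[symmetric] by simp
  ultimately show ?thesis
    unfolding E_partial_def s_def[symmetric] by (simp add: divide_right_mono)
qed

lemma E_partial_le_1:
  assumes "\<sigma> permutes {1..n}" and "n \<ge> 2"
  shows "E_partial n \<sigma> k \<le> 1"
proof -
  have weighted: "real (\<Sum>i=1..k. i * cyc_count n \<sigma> i) \<le> real n"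
    using weighted_cycle_count_le[OF assms(1)] by (simp only: of_nat_le_iff)
  have "E_partial n \<sigma> k \<le> ln (real n) / ln (real n)"
    using E_partial_le_log_ratio[OF assms(2) _ weighted] assms(2) by simp
  then show ?thesis using assms(2) by simp
qed

lemma E_partial_le_if_few_short_cycles:
  assumes "n \<ge> 2" and "k < m" and "\<delta> \<ge> 0"
    and few: "\<forall>i<m. real (cyc_count n \<sigma> i) \<le> real n powr \<delta>"
  shows "E_partial n \<sigma> k \<le> \<delta> + 2 * ln (real m) / ln (real n)"
proof -
  have "real (\<Sum>i=1..k. i * cyc_count n \<sigma> i) = (\<Sum>i=1..k. real i * real (cyc_count n \<sigma> i))"
    by simp
  also have "\<dots> \<le> (\<Sum>i=1..k. real m * real n powr \<delta>)"
    using few assms(2) by (intro sum_mono mult_mono) auto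
  also have "\<dots> \<le> real m * real m * real n powr \<delta>"
    using assms(2) by (simp add: mult_right_mono)
  finally have "real (\<Sum>i=1..k. i * cyc_count n \<sigma> i) \<le> real m * real m * real n powr \<delta>" .
  moreover have "1 \<le> real m * real m * real n powr \<delta>"
  proof -
    have "1 \<le> real m" using assms(2) by simp
    then have "1 \<le> real m * real m" using mult_mono[of 1 "real m" 1 "real m"] by simp
    moreover have "1 \<le> real n powr \<delta>" using assms(1,3) by (simp add: ge_one_powr_ge_zero)
    ultimately show ?thesis using mult_mono[of 1 "real m * real m" 1] by simp
  qed
  ultimately have "E_partial n \<sigma> k \<le> ln (real m * real m * real n powr \<delta>) / ln (real n)"
    using E_partial_le_log_ratio assms(1) by blast
  also have "\<dots> = \<delta> + 2 * ln (real m) / ln (real n)"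
    using assms(1,2) by (simp add: ln_mult ln_powr field_simps)
  finally show ?thesis .
qed

lemma sum_increments_div_by_parts:
  fixes a :: "nat \<Rightarrow> real"
  assumes "a 0 = 0"
  shows "(\<Sum>i=1..N. (a i - a (i - 1)) / real i)
       = a N / real N + (\<Sum>i=1..<N. a i * (1 / real i - 1 / real (Suc i)))"
proof (induction N)
  case 0
  then show ?case using assms by simp
next
  case (Suc N)
  have "(\<Sum>i=1..Suc N. (a i - a (i - 1)) / real i)
      = a N / real N + (\<Sum>i=1..<N. a i * (1 / real i - 1 / real (Suc i)))
        + (a (Suc N) - a N) / real (Suc N)"
    using Suc.IH by simp
  also have "\<dots> = a (Suc N) / real (Suc N)
      + ((\<Sum>i=1..<N. a i * (1 / real i - 1 / real (Suc i))) + a N * (1 / real N - 1 / real (Suc N)))"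
    by (simp add: diff_divide_distrib right_diff_distrib)
  also have "\<dots> = a (Suc N) / real (Suc N) + (\<Sum>i=1..<Suc N. a i * (1 / real i - 1 / real (Suc i)))"
    using assms by (cases "N = 0") simp_all
  finally show ?case .
qed

lemma sum_inverse_diff_telescope:
  assumes "p \<le> q"
  shows "(\<Sum>i=p..<q. 1 / real i - 1 / real (Suc i)) = 1 / real p - 1 / real q"
  using sum_Suc_diff'[OF assms, of "\<lambda>i. - 1 / real i"] by simp

lemma sum_increments_div_le:
  fixes a :: "nat \<Rightarrow> real" and B :: real
  assumes "a 0 = 0" and "1 \<le> m" and "m \<le> N"
    and short: "\<And>i. 1 \<le> i \<Longrightarrow> i < m \<Longrightarrow> a i \<le> B"
    and long: "\<And>i. m \<le> i \<Longrightarrow> i \<le> N \<Longrightarrow> a i \<le> 1"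
  shows "(\<Sum>i=1..N. (a i - a (i - 1)) / real i) \<le> (1 - 1 / real m) * B + 1 / real m"
proof -
  define w where "w i = 1 / real i - 1 / real (Suc i)" for i
  have w_nonneg: "w i \<ge> 0" if "i \<ge> 1" for i
    using that unfolding w_def by (simp add: frac_le)
  have "(\<Sum>i=1..<m. a i * w i) \<le> (\<Sum>i=1..<m. B * w i)"
    using short w_nonneg by (intro sum_mono mult_right_mono) auto
  also have "\<dots> = B * (1 - 1 / real m)"
    using sum_inverse_diff_telescope[of 1 m] assms(2) by (simp add: w_def sum_distrib_left[symmetric])
  finally have low: "(\<Sum>i=1..<m. a i * w i) \<le> B * (1 - 1 / real m)" .
  have "(\<Sum>i=m..<N. a i * w i) \<le> (\<Sum>i=m..<N. w i)"
    using long w_nonneg assms(2) mult_right_mono[of "a _" 1 "w _"] by (intro sum_mono) auto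
  also have "\<dots> = 1 / real m - 1 / real N"
    using sum_inverse_diff_telescope[OF assms(3)] by (simp add: w_def)
  finally have high: "(\<Sum>i=m..<N. a i * w i) \<le> 1 / real m - 1 / real N" .
  have last: "a N / real N \<le> 1 / real N"
    using long[of N] assms(3) by (simp add: divide_right_mono)
  have "(\<Sum>i=1..N. (a i - a (i - 1)) / real i) = a N / real N + (\<Sum>i=1..<N. a i * w i)"
    using sum_increments_div_by_parts[of a N, OF assms(1)] by (simp add: w_def)
  also have "\<dots> = a N / real N + (\<Sum>i=1..<m. a i * w i) + (\<Sum>i=m..<N. a i * w i)"
    using sum.atLeastLessThan_concat[of 1 m N "\<lambda>i. a i * w i"] assms(2,3) by simp
  also have "\<dots> \<le> (1 - 1 / real m) * B + 1 / real m"
    using low high last by (simp add: algebra_simps)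
  finally show ?thesis .
qed

lemma eventually_log_ratio_small:
  fixes c \<epsilon> :: real
  assumes "\<epsilon> > 0"
  shows "eventually (\<lambda>n::nat. c / ln (real n) < \<epsilon>) sequentially"
proof -
  have "(\<lambda>n::nat. c / ln (real n)) \<longlonglongrightarrow> 0" by real_asymp
  then show ?thesis using assms by (rule order_tendstoD(2))
qed

theorem lemma2p6:
  fixes \<epsilon> :: real and m :: nat
  assumes "\<epsilon> > 0" and "m \<ge> 1"
  shows "\<exists>\<delta>::real. \<delta> > 0 \<and> (\<exists>n0::nat. \<forall>n::nat. \<forall>\<sigma>::nat \<Rightarrow> nat.
           n > n0 \<longrightarrow> \<sigma> permutes {1..n} \<longrightarrow>
           (\<forall>i<m. real (cyc_count n \<sigma> i) \<le> real n powr \<delta>) \<longrightarrow>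
           E_val n \<sigma> \<le> 1 / real m + \<epsilon>)"
proof -
  have "eventually (\<lambda>n. 2 \<le> n \<and> m \<le> n \<and> 2 * ln (real m) / ln (real n) < \<epsilon> / 2) sequentially"
    using eventually_log_ratio_small[of "\<epsilon> / 2" "2 * ln (real m)"] assms(1)
    by (intro eventually_conj eventually_ge_at_top) auto
  then obtain n0 where n0: "\<And>n. n \<ge> n0 \<Longrightarrow> 2 \<le> n \<and> m \<le> n \<and> 2 * ln (real m) / ln (real n) < \<epsilon> / 2"
    unfolding eventually_sequentially by blast
  have "E_val n \<sigma> \<le> 1 / real m + \<epsilon>"
    if "n > n0" "\<sigma> permutes {1..n}" "\<forall>i<m. real (cyc_count n \<sigma> i) \<le> real n powr (\<epsilon> / 2)"
    for n \<sigma>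
  proof -
    have n: "2 \<le> n" "m \<le> n" "2 * ln (real m) / ln (real n) < \<epsilon> / 2"
      using n0[of n] \<open>n > n0\<close> by auto
    have "E_val n \<sigma> = (\<Sum>i=1..n. (E_partial n \<sigma> i - E_partial n \<sigma> (i - 1)) / real i)"
      unfolding E_val_def e_coef_def ..
    also have "\<dots> \<le> (1 - 1 / real m) * \<epsilon> + 1 / real m"
    proof (rule sum_increments_div_le[OF _ assms(2) n(2)])
      show "E_partial n \<sigma> 0 = 0" by (simp add: E_partial_def)
      show "E_partial n \<sigma> i \<le> \<epsilon>" if "i < m" for i
        using E_partial_le_if_few_short_cycles[OF n(1) that _ \<open>\<forall>i<m. _\<close>] n(3) assms(1)
        by simp
      show "E_partial n \<sigma> i \<le> 1" for i
        using E_partial_le_1[OF that(2) n(1)] .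
    qed
    also have "\<dots> \<le> 1 / real m + \<epsilon>"
      using assms by (simp add: algebra_simps)
    finally show ?thesis .
  qed
  then show ?thesis
    using assms(1) by (intro exI[of _ "\<epsilon> / 2"]) auto
qed

end
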